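(* Let $G$ be a group and let $\{\mathrm{id}\}=H_0\subset H_1\subset\cdots\subset H_k$ be a nested sequence of subgroups of $G$. Let $A$ be a finite symmetric subset of $G$ and set $A_i:=A^2\cap H_i$ for $i=0,\dots,k$. Assume that $\langle A_{i+1}\rangle \not\subseteq A_{i+1}H_i$ for every $i=0,\dots,k-1$. Then $|A^5|\geq k|A|$.
   Context: A subset $A$ is symmetric if $\mathrm{id}\in A$ and $a^{-1}\in A$ whenever $a\in A$. $A^n$ denotes the $n$-fold product set, $\langle B\rangle$ the subgroup generated by $B$, and $A_{i+1}H_i=\{ah : a\in A_{i+1}, h\in H_i\}$. *)

theory Defs
  imports "HOL-Algebra.Algebra"
begin

fun setpow :: "('a, 'b) monoid_scheme \<Rightarrow> 'a set \<Rightarrow> nat \<Rightarrow> 'a set" where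
  "setpow G A 0 = {\<one>\<^bsub>G\<^esub>}"
| "setpow G A (Suc n) = A <#>\<^bsub>G\<^esub> setpow G A n"

definition symmetric_set :: "('a, 'b) monoid_scheme \<Rightarrow> 'a set \<Rightarrow> bool" where
  "symmetric_set G A \<longleftrightarrow> A \<subseteq> carrier G \<and> \<one>\<^bsub>G\<^esub> \<in> A \<and> (\<forall>a\<in>A. inv\<^bsub>G\<^esub> a \<in> A)"

end

theory Submission
  imports Defs
begin

text \<open>
  For each \<open>i < k\<close> the hypothesis yields an element \<open>x\<^sub>i \<in> A\<^sup>4 \<inter> H\<^sub>i\<^sub>+\<^sub>1\<close> outside
  \<open>A\<^sub>i\<^sub>+\<^sub>1 H\<^sub>i\<close>: otherwise \<open>A\<^sub>i\<^sub>+\<^sub>1 A\<^sub>i\<^sub>+\<^sub>1 \<subseteq> A\<^sub>i\<^sub>+\<^sub>1 H\<^sub>i\<close>, so \<open>A\<^sub>i\<^sub>+\<^sub>1 H\<^sub>i\<close> is stable under left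
  multiplication by the symmetric set \<open>A\<^sub>i\<^sub>+\<^sub>1\<close> and hence contains \<open>\<langle>A\<^sub>i\<^sub>+\<^sub>1\<rangle>\<close>.
  The translates \<open>A x\<^sub>i \<subseteq> A\<^sup>5\<close> are pairwise disjoint: if \<open>a x\<^sub>i = b x\<^sub>j\<close> with \<open>i < j\<close>, then
  \<open>x\<^sub>j = (b\<^sup>-\<^sup>1 a) x\<^sub>i\<close> with \<open>b\<^sup>-\<^sup>1 a \<in> A\<^sub>j\<^sub>+\<^sub>1\<close> and \<open>x\<^sub>i \<in> H\<^sub>j\<close>, contradicting the choice of \<open>x\<^sub>j\<close>.
  So \<open>A\<^sup>5\<close> contains \<open>k\<close> disjoint sets of size \<open>|A|\<close>.
\<close>

lemma set_mult_memI: "h \<in> H \<Longrightarrow> k \<in> K \<Longrightarrow> h \<otimes>\<^bsub>G\<^esub> k \<in> H <#>\<^bsub>G\<^esub> K"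
  unfolding set_mult_def by blast

lemma set_mult_memE:
  assumes "x \<in> H <#>\<^bsub>G\<^esub> K"
  obtains h k where "h \<in> H" "k \<in> K" "x = h \<otimes>\<^bsub>G\<^esub> k"
  using assms unfolding set_mult_def by blast

lemma finite_setpow: "finite A \<Longrightarrow> finite (setpow G A n)"
  by (induction n) (auto simp: set_mult_def)

lemma (in monoid) setpow_subset_carrier: "A \<subseteq> carrier G \<Longrightarrow> setpow G A n \<subseteq> carrier G"
  by (induction n) (auto simp: set_mult_closed)

lemma (in group) setpow_add:
  assumes "A \<subseteq> carrier G"
  shows "setpow G A m <#> setpow G A n = setpow G A (m + n)"
proof (induction m)
  case 0
  show ?case
    using setpow_subset_carrier[OF assms, of n] by (force simp: set_mult_def)
next
  case (Suc m)
  then show ?case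
    using set_mult_assoc[OF assms setpow_subset_carrier[OF assms] setpow_subset_carrier[OF assms]]
    by simp
qed

lemma (in group) setpow_two: "A \<subseteq> carrier G \<Longrightarrow> setpow G A 2 = A <#> A"
  using coset_mult_one[of A] by (simp only: numeral_2_eq_2 setpow.simps r_coset_eq_set_mult)

lemma rcoset_subset_setpow_Suc: "x \<in> setpow G A n \<Longrightarrow> A #>\<^bsub>G\<^esub> x \<subseteq> setpow G A (Suc n)"
  unfolding r_coset_eq_set_mult setpow.simps by (intro mono_set_mult) auto

lemma (in group) symmetric_set_setpow_two:
  assumes "symmetric_set G A"
  shows "symmetric_set G (setpow G A 2)"
proof -
  have A: "A \<subseteq> carrier G" "\<one> \<in> A" "\<And>a. a \<in> A \<Longrightarrow> inv a \<in> A"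
    using assms by (auto simp: symmetric_set_def)
  have "inv p \<in> A <#> A" if "p \<in> A <#> A" for p
    using that
  proof (rule set_mult_memE)
    fix a b
    assume ab: "a \<in> A" "b \<in> A" and p: "p = a \<otimes> b"
    then have "a \<in> carrier G" "b \<in> carrier G"
      using A(1) by auto
    then have "inv p = inv b \<otimes> inv a"
      by (simp add: p inv_mult_group)
    then show ?thesis
      using set_mult_memI[where G = G, OF A(3)[OF ab(2)] A(3)[OF ab(1)]] by simp
  qed
  moreover have "\<one> \<in> A <#> A"
    using set_mult_memI[where G = G, OF A(2) A(2)] by simp
  ultimately show ?thesis
    using set_mult_closed[OF A(1) A(1)] by (simp add: symmetric_set_def setpow_two[OF A(1)])
qed

lemma symmetric_set_Int_subgroup:
  "symmetric_set G B \<Longrightarrow> subgroup K G \<Longrightarrow> symmetric_set G (B \<inter> K)"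
  by (auto simp: symmetric_set_def subgroup.one_closed subgroup.m_inv_closed)

lemma (in group) generate_subset_set_mult_subgroup:
  assumes B: "symmetric_set G B" and K: "subgroup K G" and BB: "B <#> B \<subseteq> B <#> K"
  shows "generate G B \<subseteq> B <#> K"
proof -
  have B_carrier: "B \<subseteq> carrier G" and K_carrier: "K \<subseteq> carrier G"
    using B K by (auto simp: symmetric_set_def subgroup.subset)
  have S_carrier: "B <#> K \<subseteq> carrier G"
    using set_mult_closed[OF B_carrier K_carrier] .
  have "B <#> (B <#> K) = (B <#> B) <#> K"
    using set_mult_assoc B_carrier K_carrier by simp
  also have "\<dots> \<subseteq> (B <#> K) <#> K"
    using BB by (simp add: mono_set_mult)
  also have "\<dots> = B <#> K"
    using set_mult_assoc B_carrier K_carrier subgroup_mult_id[OF K] by simp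
  finally have stable: "B <#> (B <#> K) \<subseteq> B <#> K" .
  have "g \<otimes> s \<in> B <#> K" if "g \<in> generate G B" "s \<in> B <#> K" for g s
    using that
  proof (induction arbitrary: s rule: generate.induct)
    case one
    then have "s \<in> carrier G"
      using S_carrier by blast
    with one show ?case by simp
  next
    case (incl h)
    show ?case
      using stable set_mult_memI[OF incl.hyps incl.prems] ..
  next
    case (inv h)
    then have "inv h \<in> B"
      using B by (simp add: symmetric_set_def)
    show ?case
      using stable set_mult_memI[OF \<open>inv h \<in> B\<close> inv.prems] ..
  next
    case (eng g h)
    have "g \<in> carrier G" "h \<in> carrier G" "s \<in> carrier G"
      using eng.hyps eng.prems generate_in_carrier[OF B_carrier] S_carrier by auto
    then have "g \<otimes> h \<otimes> s = g \<otimes> (h \<otimes> s)"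
      by (simp add: m_assoc)
    then show ?case
      using eng.IH eng.prems by simp
  qed
  moreover have "\<one> \<otimes> \<one> \<in> B <#> K"
    using B subgroup.one_closed[OF K] by (intro set_mult_memI) (auto simp: symmetric_set_def)
  ultimately have "g \<otimes> \<one> \<in> B <#> K" if "g \<in> generate G B" for g
    using that by simp
  then show ?thesis
    using generate_in_carrier[OF B_carrier] by (metis r_one subsetI)
qed

lemma (in group) exists_setpow_four_notin_set_mult:
  assumes A: "symmetric_set G A" and K: "subgroup K G" and L: "subgroup L G"
    and not_covered: "\<not> generate G (setpow G A 2 \<inter> L) \<subseteq> (setpow G A 2 \<inter> L) <#> K"
  shows "\<exists>x \<in> setpow G A 4 \<inter> L. x \<notin> (setpow G A 2 \<inter> L) <#> K"
proof (rule ccontr)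
  let ?B = "setpow G A 2 \<inter> L"
  have A_carrier: "A \<subseteq> carrier G"
    using A by (simp add: symmetric_set_def)
  have "?B <#> ?B \<subseteq> setpow G A 2 <#> setpow G A 2"
    by (rule mono_set_mult) auto
  also have "\<dots> = setpow G A 4"
    using setpow_add[OF A_carrier, of 2 2] by simp
  finally have "?B <#> ?B \<subseteq> setpow G A 4" .
  moreover have "?B <#> ?B \<subseteq> L"
  proof
    fix x
    assume "x \<in> ?B <#> ?B"
    then show "x \<in> L"
      by (rule set_mult_memE) (use subgroup.m_closed[OF L] in blast)
  qed
  moreover assume "\<not> ?thesis"
  ultimately have "?B <#> ?B \<subseteq> ?B <#> K"
    by blast
  then have "generate G ?B \<subseteq> ?B <#> K"
    by (intro generate_subset_set_mult_subgroup symmetric_set_Int_subgroup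
        symmetric_set_setpow_two A K L)
  with not_covered show False ..
qed

lemma (in group) rcosets_disjoint_of_notin_set_mult:
  assumes A: "symmetric_set G A" and K: "subgroup K G" and L: "subgroup L G" and "K \<subseteq> L"
    and x: "x \<in> K" and y: "y \<in> L" and y_notin: "y \<notin> (setpow G A 2 \<inter> L) <#> K"
  shows "(A #> x) \<inter> (A #> y) = {}"
proof (rule ccontr)
  have A_carrier: "A \<subseteq> carrier G" and inv_A: "\<And>a. a \<in> A \<Longrightarrow> inv a \<in> A"
    using A by (auto simp: symmetric_set_def)
  have x_carrier: "x \<in> carrier G" and y_carrier: "y \<in> carrier G"
    using subgroup.mem_carrier[OF K x] subgroup.mem_carrier[OF L y] .
  assume "(A #> x) \<inter> (A #> y) \<noteq> {}"
  then obtain a b where ab: "a \<in> A" "b \<in> A" "a \<otimes> x = b \<otimes> y"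
    unfolding r_coset_def by blast
  then have a_carrier: "a \<in> carrier G" and b_carrier: "b \<in> carrier G"
    using A_carrier by auto
  define c where "c = inv b \<otimes> a"
  have c_carrier: "c \<in> carrier G"
    using a_carrier b_carrier by (simp add: c_def)
  have "y = inv b \<otimes> (b \<otimes> y)"
    using b_carrier y_carrier by (simp add: m_assoc [symmetric])
  also have "\<dots> = c \<otimes> x"
    using a_carrier b_carrier x_carrier by (simp add: c_def m_assoc ab(3) [symmetric])
  finally have y_eq: "y = c \<otimes> x" .
  have "c \<in> setpow G A 2"
    using set_mult_memI[where G = G, OF inv_A[OF ab(2)] ab(1)] by (simp add: c_def setpow_two[OF A_carrier])
  moreover have "c \<in> L"
  proof -
    have "c = y \<otimes> inv x"
      using y_eq x_carrier c_carrier by (simp add: m_assoc)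
    then show ?thesis
      using subgroup.m_closed[OF L y subgroup.m_inv_closed[OF L]] x \<open>K \<subseteq> L\<close> by auto
  qed
  ultimately have "y \<in> (setpow G A 2 \<inter> L) <#> K"
    using set_mult_memI[where G = G, of c _ x K] y_eq x by simp
  with y_notin show False ..
qed

lemma chain_subset_le:
  assumes "\<And>i. i < k \<Longrightarrow> H i \<subseteq> H (Suc i)" and "i \<le> j" and "j \<le> k"
  shows "H i \<subseteq> H j"
  using assms(2,3)
proof (induction j rule: dec_induct)
  case (step j)
  then show ?case
    using assms(1)[of j] by auto
qed simp

lemma card_ge_disjoint_family:
  assumes "finite S" and "\<And>i. i < k \<Longrightarrow> F i \<subseteq> S" and "\<And>i. i < k \<Longrightarrow> card (F i) = n"
    and "\<And>i j. i < j \<Longrightarrow> j < k \<Longrightarrow> F i \<inter> F j = {}"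
  shows "k * n \<le> card S"
proof -
  have "k * n = card (\<Union>i<k. F i)"
  proof (subst card_UN_disjoint)
    show "\<forall>i\<in>{..<k}. finite (F i)"
      using assms(1,2) by (meson finite_subset lessThan_iff)
    show "\<forall>i\<in>{..<k}. \<forall>j\<in>{..<k}. i \<noteq> j \<longrightarrow> F i \<inter> F j = {}"
      using assms(4) by (metis Int_commute lessThan_iff linorder_neqE_nat)
  qed (use assms(3) in auto)
  also have "\<dots> \<le> card S"
    using assms(1,2) by (intro card_mono) auto
  finally show ?thesis .
qed

theorem lemma3p1:
  fixes G :: "('a, 'b) monoid_scheme" and H :: "nat \<Rightarrow> 'a set" and A :: "'a set" and k :: nat
  assumes "group G"
    and "H 0 = {\<one>\<^bsub>G\<^esub>}"
    and "\<And>i. i \<le> k \<Longrightarrow> subgroup (H i) G"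
    and "\<And>i. i < k \<Longrightarrow> H i \<subseteq> H (Suc i)"
    and "finite A" and "symmetric_set G A"
    and "\<And>i. i < k \<Longrightarrow>
           \<not> generate G (setpow G A 2 \<inter> H (Suc i))
               \<subseteq> (setpow G A 2 \<inter> H (Suc i)) <#>\<^bsub>G\<^esub> H i"
  shows "card (setpow G A 5) \<ge> k * card A"
proof -
  interpret group G by fact
  have A_carrier: "A \<subseteq> carrier G"
    using assms(6) by (simp add: symmetric_set_def)
  have "\<exists>x \<in> setpow G A 4 \<inter> H (Suc i). x \<notin> (setpow G A 2 \<inter> H (Suc i)) <#>\<^bsub>G\<^esub> H i"
    if "i < k" for i
    using exists_setpow_four_notin_set_mult[OF assms(6) assms(3) assms(3) assms(7)]
      that less_imp_le Suc_leI by blast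
  then obtain x where x: "\<And>i. i < k \<Longrightarrow> x i \<in> setpow G A 4 \<inter> H (Suc i)"
    and x_notin: "\<And>i. i < k \<Longrightarrow> x i \<notin> (setpow G A 2 \<inter> H (Suc i)) <#>\<^bsub>G\<^esub> H i"
    by metis
  have x_carrier: "x i \<in> carrier G" if "i < k" for i
    using x[OF that] setpow_subset_carrier[OF A_carrier] by blast
  show ?thesis
  proof (rule card_ge_disjoint_family[where F = "\<lambda>i. A #>\<^bsub>G\<^esub> x i"])
    show "finite (setpow G A 5)"
      using assms(5) by (rule finite_setpow)
    show "A #>\<^bsub>G\<^esub> x i \<subseteq> setpow G A 5" if "i < k" for i
      using rcoset_subset_setpow_Suc[of "x i" G A 4] x[OF that] by simp
    show "card (A #>\<^bsub>G\<^esub> x i) = card A" if "i < k" for i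
      using card_rcosets_equal[OF rcosetsI[OF A_carrier x_carrier[OF that]] A_carrier] by simp
    show "(A #>\<^bsub>G\<^esub> x i) \<inter> (A #>\<^bsub>G\<^esub> x j) = {}" if "i < j" "j < k" for i j
      using x[of i] x[of j] chain_subset_le[of k H "Suc i" j, OF assms(4)] that
      by (intro rcosets_disjoint_of_notin_set_mult[OF assms(6) assms(3) assms(3) assms(4) _ _ x_notin])
        auto
  qed
qed

end
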